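(* For Lebesgue almost every $y\in[0,1]$, the fibre $K_y:=\{x\in\mathbb{R}:(x,y)\in K\}$ contains a nontrivial interval.
   Context: For $k\ge 0$ and $n\ge 1$ let $t_{k,n}:=\frac{1}{2^k n}$. Define the similarities of $\mathbb{R}^2$: $U(x,y)=\left(\frac{x}{2},\frac{y+1}{2}\right)$, $D_0(x,y)=\left(\frac{x}{2},\frac{y}{2}\right)$, and $D_{k,n}(x,y)=\left(\frac{x+t_{k,n}}{2},\frac{y}{2}\right)$ for $k\ge0,n\ge1$. $K$ is the unique non-empty compact set $K\subset\mathbb{R}^2$ satisfying $K=U(K)\cup D_0(K)\cup\bigcup_{k\ge0,n\ge1}D_{k,n}(K)$. *)

theory Defs
  imports "HOL-Analysis.Analysis"
begin

definition tkn :: "nat \<Rightarrow> nat \<Rightarrow> real" where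
  "tkn k n = 1 / (2 ^ k * real n)"

definition U_map :: "real \<times> real \<Rightarrow> real \<times> real" where
  "U_map p = (fst p / 2, (snd p + 1) / 2)"

definition D0_map :: "real \<times> real \<Rightarrow> real \<times> real" where
  "D0_map p = (fst p / 2, snd p / 2)"

definition Dkn_map :: "nat \<Rightarrow> nat \<Rightarrow> real \<times> real \<Rightarrow> real \<times> real" where
  "Dkn_map k n p = ((fst p + tkn k n) / 2, snd p / 2)"

definition is_attractor :: "(real \<times> real) set \<Rightarrow> bool" where
  "is_attractor K \<longleftrightarrow> K \<noteq> {} \<and> compact K \<and>
     K = U_map ` K \<union> D0_map ` K \<union> (\<Union>k. \<Union>n\<in>{1..}. Dkn_map k n ` K)"

definition fibre :: "(real \<times> real) set \<Rightarrow> real \<Rightarrow> real set" where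
  "fibre K y = {x. (x, y) \<in> K}"

end

(* Only the maps U, D_0 and D_{0,n} are needed: each is p \<mapsto> (p + v)/2 for a digit
   v \<in> {(0,1)} \<union> {(t,0) | t \<in> T}, where T = {0} \<union> {1/n | n \<ge> 1}, so the closed set K contains
   every point \<Sum>_i v_i/2^(i+1). Reading y in binary, the fibre K_y contains every \<Sum>_i e_i/2^(i+1)
   with e_i \<in> T vanishing at the binary ones of y. A greedy algorithm writes each x \<in> [0, 2^-k] as
   \<Sum>_j c_j/2^(kj) with c_j \<in> T; as T is closed under halving, this expansion can be spread over
   any positions p_0 < p_1 < ... with p_j \<le> kj + M, which yields an interval in K_y as soon as
   the binary zeros of y have lower density at least 1/3. For the number Z_N of zeros among the
   first N digits, \<integral>_0^1 (27/64)^Z_N = (91/128)^N, so Markov's inequality bounds the measure of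
   {3 Z_N < N} by (91/96)^N, and Borel-Cantelli gives Z_N \<ge> N/3 eventually for almost every y. *)

theory Submission
  imports Defs
begin

lemma sums_Pair:
  assumes "f sums a" "g sums b"
  shows "(\<lambda>i. (f i, g i)) sums (a, b)"
proof -
  have "(\<Sum>i<N. (f i, g i)) = (\<Sum>i<N. f i, \<Sum>i<N. g i)" for N
    by (induction N) (simp_all add: zero_prod_def)
  then show ?thesis
    using tendsto_Pair[OF assms[unfolded sums_def]] by (simp add: sums_def)
qed

lemma remainder_sums:
  fixes q :: real
  assumes "1 < q" and rec: "\<And>j. r (Suc j) = q * (r j - d j)" and bound: "\<And>j. \<bar>r j\<bar> \<le> B"
  shows "(\<lambda>j. d j / q ^ j) sums r 0"
proof -
  have partial: "(\<Sum>j<N. d j / q ^ j) = r 0 - r N / q ^ N" for N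
  proof (induction N)
    case (Suc N)
    have "r (Suc N) / q ^ Suc N = (r N - d N) / q ^ N"
      using \<open>1 < q\<close> by (simp add: rec)
    then show ?case
      using Suc by (simp add: diff_divide_distrib)
  qed simp
  have "(\<lambda>N. r N / q ^ N) \<longlonglongrightarrow> 0"
  proof (rule Lim_null_comparison)
    show "\<forall>\<^sub>F N in sequentially. norm (r N / q ^ N) \<le> B / q ^ N"
      using bound \<open>1 < q\<close> by (intro always_eventually allI) (simp add: divide_right_mono)
    show "(\<lambda>N. B / q ^ N) \<longlonglongrightarrow> 0"
      using \<open>1 < q\<close> by (rule LIMSEQ_divide_realpow_zero)
  qed
  then have "(\<lambda>N. r 0 - r N / q ^ N) \<longlonglongrightarrow> r 0 - 0"
    by (intro tendsto_diff tendsto_const)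
  then show ?thesis
    unfolding sums_def partial by simp
qed

definition unit_fracs :: "real set" where
  "unit_fracs = insert 0 {1 / real n | n. n \<ge> 1}"

lemma unit_fracs_cases:
  assumes "t \<in> unit_fracs"
  obtains "t = 0" | n where "n \<ge> 1" "t = 1 / real n"
  using assms unfolding unit_fracs_def by blast

lemma zero_in_unit_fracs [simp]: "0 \<in> unit_fracs"
  by (simp add: unit_fracs_def)

lemma unit_fracs_divide:
  assumes "t \<in> unit_fracs" "m \<ge> 1"
  shows "t / real m \<in> unit_fracs"
  using assms(1)
proof (cases rule: unit_fracs_cases)
  case (2 n)
  then have "t / real m = 1 / real (n * m)" by simp
  moreover have "n * m \<ge> 1" using 2 assms(2) by simp
  ultimately show ?thesis
    unfolding unit_fracs_def by blast
qed simp

definition greedy_unit_frac :: "real \<Rightarrow> real" where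
  "greedy_unit_frac u = (if u = 0 then 0 else 1 / real (nat \<lceil>1 / u\<rceil>))"

lemma greedy_unit_frac:
  assumes "0 \<le> u" "u \<le> 1"
  shows "greedy_unit_frac u \<in> unit_fracs" "greedy_unit_frac u \<le> u"
    and "u - greedy_unit_frac u \<le> u\<^sup>2"
proof -
  consider "u = 0" | "0 < u" using assms by linarith
  then have "greedy_unit_frac u \<in> unit_fracs \<and> greedy_unit_frac u \<le> u
      \<and> u - greedy_unit_frac u \<le> u\<^sup>2"
  proof cases
    case 1
    then show ?thesis by (simp add: greedy_unit_frac_def)
  next
    case 2
    define n where "n = nat \<lceil>1 / u\<rceil>"
    have "1 \<le> 1 / u" using 2 assms by (simp add: field_simps)
    then have n_lower: "1 / u \<le> real n" and n_upper: "real n < 1 / u + 1" and "1 \<le> n"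
      unfolding n_def by linarith+
    have g: "greedy_unit_frac u = 1 / real n"
      using 2 by (simp add: greedy_unit_frac_def n_def)
    have "u / (1 + u) \<le> 1 / real n"
      using n_upper 2 \<open>1 \<le> n\<close> by (simp add: field_simps)
    then have "u - 1 / real n \<le> u\<^sup>2 / (1 + u)"
      using 2 by (simp add: field_simps power2_eq_square)
    also have "\<dots> \<le> u\<^sup>2"
      using 2 by (simp add: field_simps)
    finally show ?thesis
      using n_lower 2 \<open>1 \<le> n\<close> by (auto simp: g unit_fracs_def field_simps)
  qed
  then show "greedy_unit_frac u \<in> unit_fracs" "greedy_unit_frac u \<le> u"
    and "u - greedy_unit_frac u \<le> u\<^sup>2"
    by auto
qed

lemma unit_frac_expansion:
  fixes b x :: real
  assumes "1 < b" "0 \<le> x" "x \<le> 1 / b"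
  obtains c where "\<And>j. c j \<in> unit_fracs" and "(\<lambda>j. c j / b ^ j) sums x"
proof -
  define u where "u = rec_nat x (\<lambda>_ v. b * (v - greedy_unit_frac v))"
  have u_Suc: "u (Suc j) = b * (u j - greedy_unit_frac (u j))" for j
    by (simp add: u_def)
  have "1 / b \<le> 1" using assms(1) by simp
  have u_bounds: "0 \<le> u j \<and> u j \<le> 1 / b" for j
  proof (induction j)
    case 0
    then show ?case using assms by (simp add: u_def)
  next
    case (Suc j)
    note g = greedy_unit_frac[of "u j"]
    have "(u j)\<^sup>2 \<le> (1 / b)\<^sup>2"
      using Suc by (intro power_mono) auto
    then have "u j - greedy_unit_frac (u j) \<le> (1 / b)\<^sup>2"
      using g(3) Suc \<open>1 / b \<le> 1\<close> by auto
    then have "b * (u j - greedy_unit_frac (u j)) \<le> b * (1 / b)\<^sup>2"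
      using assms(1) by (intro mult_left_mono) auto
    then show ?case
      using g(2) Suc \<open>1 / b \<le> 1\<close> assms(1) by (simp add: u_Suc power2_eq_square)
  qed
  then have "0 \<le> u j" "u j \<le> 1" for j
    using \<open>1 / b \<le> 1\<close> by (auto intro: order_trans)
  then have "greedy_unit_frac (u j) \<in> unit_fracs" for j
    by (simp add: greedy_unit_frac(1))
  moreover have "(\<lambda>j. greedy_unit_frac (u j) / b ^ j) sums x"
    using remainder_sums[of b u "\<lambda>j. greedy_unit_frac (u j)" 1] assms(1)
      \<open>\<And>j. 0 \<le> u j\<close> \<open>\<And>j. u j \<le> 1\<close> by (simp add: u_Suc u_def)
  ultimately show thesis
    by (rule that)
qed

lemma sparse_unit_frac_expansion:
  fixes x :: real
  assumes "strict_mono p" "0 < k" "\<And>j. p j \<le> k * j + M" "0 \<le> x" "x \<le> 1 / 2 ^ (k + M + 1)"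
  obtains e where "\<And>i. e i \<in> unit_fracs" "\<And>i. i \<notin> range p \<Longrightarrow> e i = 0"
    and "(\<lambda>i. e i / 2 ^ Suc i) sums x"
proof -
  have "(1 :: real) < 2 ^ k"
    using \<open>0 < k\<close> by (simp add: one_less_power)
  moreover have "x * 2 ^ (M + 1) \<le> 1 / 2 ^ k"
    using assms(5) by (simp add: field_simps power_add)
  ultimately obtain c where c: "\<And>j. c j \<in> unit_fracs"
    and c_sums: "(\<lambda>j. c j / (2 ^ k) ^ j) sums (x * 2 ^ (M + 1))"
    using unit_frac_expansion[of "2 ^ k" "x * 2 ^ (M + 1)"] assms(4) by auto
  \<comment> \<open>the exponent below is never truncated, as p j \<le> k j + M\<close>
  define e where "e i = (if i \<in> range p then c (inv p i) / 2 ^ (k * inv p i + M - i) else 0)" for i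
  have "inj p"
    using assms(1) by (rule strict_mono_imp_inj_on)
  have e_p: "e (p j) / 2 ^ Suc (p j) = c j / (2 ^ k) ^ j / 2 ^ (M + 1)" for j
  proof -
    have "(2 :: real) ^ (k * j + M - p j) * 2 ^ Suc (p j) = (2 ^ k) ^ j * 2 ^ (M + 1)"
      using assms(3)[of j] by (simp flip: power_add power_mult)
    then show ?thesis
      using \<open>inj p\<close> by (simp add: e_def)
  qed
  have "(\<lambda>j. e (p j) / 2 ^ Suc (p j)) sums (x * 2 ^ (M + 1) / 2 ^ (M + 1))"
    unfolding e_p by (rule sums_divide[OF c_sums])
  then have "(\<lambda>j. e (p j) / 2 ^ Suc (p j)) sums x"
    by simp
  then have e_sums: "(\<lambda>i. e i / 2 ^ Suc i) sums x"
    by (subst (asm) sums_mono_reindex[OF assms(1)]) (auto simp: e_def)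
  have e_unit: "e i \<in> unit_fracs" for i
    using unit_fracs_divide[OF c, of "2 ^ _"] by (simp add: e_def)
  have e_zero: "e i = 0" if "i \<notin> range p" for i
    using that by (simp add: e_def)
  show thesis
    using e_unit e_zero e_sums by (rule that)
qed

lemma enumerate_le_of_density:
  fixes S :: "nat set"
  assumes "0 < c" and dense: "\<And>N. N \<ge> N0 \<Longrightarrow> N \<le> c * card (S \<inter> {..<N})"
  shows "infinite S" and "enumerate S j < c * Suc j + N0"
proof -
  show inf: "infinite S"
  proof
    assume "finite S"
    define N where "N = max N0 (c * card S + 1)"
    have "N \<le> c * card (S \<inter> {..<N})"
      by (rule dense) (simp add: N_def)
    also have "\<dots> \<le> c * card S"
      using \<open>finite S\<close> by (intro mult_le_mono2 card_mono) auto
    also have "\<dots> < N"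
      by (simp add: N_def)
    finally show False by simp
  qed
  show "enumerate S j < c * Suc j + N0"
  proof (rule ccontr)
    define N where "N = c * Suc j + N0"
    assume "\<not> enumerate S j < N"
    have sub: "S \<inter> {..<N} \<subseteq> enumerate S ` {..<j}"
    proof
      fix i assume "i \<in> S \<inter> {..<N}"
      then obtain k where i: "i = enumerate S k" "i < N"
        using range_enumerate[OF inf] by blast
      have "k < j"
      proof (rule ccontr)
        assume "\<not> k < j"
        then have "enumerate S j \<le> i"
          using inf i(1) by simp
        then show False
          using i(2) \<open>\<not> enumerate S j < N\<close> by simp
      qed
      then show "i \<in> enumerate S ` {..<j}"
        using i by blast
    qed
    have "card (S \<inter> {..<N}) \<le> j"
      using card_mono[OF _ sub] card_image_le[of "{..<j}" "enumerate S"] by simp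
    have "N \<le> c * card (S \<inter> {..<N})"
      by (rule dense) (simp add: N_def)
    also have "\<dots> \<le> c * j"
      using \<open>card (S \<inter> {..<N}) \<le> j\<close> by simp
    also have "\<dots> < N"
      using \<open>0 < c\<close> by (simp add: N_def)
    finally show False by simp
  qed
qed

lemma closed_halving_invariant_sums_mem:
  fixes S :: "'a::real_normed_vector set"
  assumes "closed S" "S \<noteq> {}"
    and step: "\<And>p i. p \<in> S \<Longrightarrow> (p + v i) /\<^sub>R 2 \<in> S"
    and s: "(\<lambda>i. v i /\<^sub>R 2 ^ Suc i) sums s"
  shows "s \<in> S"
proof -
  have mem: "(\<Sum>i<N. v i /\<^sub>R 2 ^ Suc i) + p /\<^sub>R 2 ^ N \<in> S" if "p \<in> S" for N p
    using that
  proof (induction N arbitrary: p)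
    case (Suc N)
    have "(\<Sum>i<Suc N. v i /\<^sub>R 2 ^ Suc i) + p /\<^sub>R 2 ^ Suc N
        = (\<Sum>i<N. v i /\<^sub>R 2 ^ Suc i) + ((p + v N) /\<^sub>R 2) /\<^sub>R 2 ^ N"
      by (simp add: scaleR_add_right)
    then show ?case
      using Suc.IH[OF step[OF Suc.prems, of N]] by (simp only:)
  qed simp
  obtain p where "p \<in> S" using assms(2) by blast
  have "(\<lambda>N. p /\<^sub>R 2 ^ N) \<longlonglongrightarrow> 0"
    using tendsto_scaleR[OF LIMSEQ_inverse_realpow_zero[of 2] tendsto_const[of p]] by simp
  then have "(\<lambda>N. (\<Sum>i<N. v i /\<^sub>R 2 ^ Suc i) + p /\<^sub>R 2 ^ N) \<longlonglongrightarrow> s + 0"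
    using s unfolding sums_def by (intro tendsto_add)
  then show ?thesis
    using closed_sequentially[OF assms(1) mem[OF \<open>p \<in> S\<close>]] by simp
qed

definition attractor_digits :: "(real \<times> real) set" where
  "attractor_digits = insert (0, 1) ((\<lambda>t. (t, 0)) ` unit_fracs)"

lemma attractor_halving_step:
  assumes "is_attractor K" "p \<in> K" "v \<in> attractor_digits"
  shows "(p + v) /\<^sub>R 2 \<in> K"
proof -
  have "U_map ` K \<union> D0_map ` K \<union> (\<Union>k. \<Union>n\<in>{1..}. Dkn_map k n ` K) \<subseteq> K"
    using assms(1) unfolding is_attractor_def by (elim conjE equalityD2)
  then have "U_map ` K \<subseteq> K" "D0_map ` K \<subseteq> K" "\<forall>k. \<forall>n\<in>{1..}. Dkn_map k n ` K \<subseteq> K"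
    unfolding Un_subset_iff UN_subset_iff by blast+
  then have U: "U_map p \<in> K" and D0: "D0_map p \<in> K"
    and D: "n \<ge> 1 \<Longrightarrow> Dkn_map 0 n p \<in> K" for n
    using assms(2) by (auto dest!: spec[of _ 0] bspec[of _ _ n])
  from assms(3) consider "v = (0, 1)" | t where "t \<in> unit_fracs" "v = (t, 0)"
    unfolding attractor_digits_def by blast
  then show ?thesis
  proof cases
    case 1
    then have "(p + v) /\<^sub>R 2 = U_map p"
      by (simp add: U_map_def prod_eq_iff)
    then show ?thesis using U by simp
  next
    case 2
    from \<open>t \<in> unit_fracs\<close> show ?thesis
    proof (cases rule: unit_fracs_cases)
      case 1
      then have "(p + v) /\<^sub>R 2 = D0_map p"
        using \<open>v = (t, 0)\<close> by (simp add: D0_map_def prod_eq_iff)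
      then show ?thesis using D0 by simp
    next
      case (2 n)
      then have "(p + v) /\<^sub>R 2 = Dkn_map 0 n p"
        using \<open>v = (t, 0)\<close> by (simp add: Dkn_map_def tkn_def prod_eq_iff)
      then show ?thesis using D[OF 2(1)] by simp
    qed
  qed
qed

definition doubling :: "real \<Rightarrow> real" where
  "doubling y = (if 2 * y < 1 then 2 * y else 2 * y - 1)"

definition zero_digits :: "real \<Rightarrow> nat set" where
  "zero_digits y = {i. 2 * (doubling ^^ i) y < 1}"

lemma binary_expansion:
  assumes "0 \<le> y" "y < 1"
  shows "(\<lambda>i. of_bool (i \<notin> zero_digits y) / 2 ^ Suc i) sums y"
proof -
  define r where "r i = (doubling ^^ i) y" for i
  have "0 \<le> r i \<and> r i < 1" for i
    by (induction i) (use assms in \<open>auto simp: r_def doubling_def\<close>)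
  then have "\<bar>r i\<bar> \<le> 1" for i
    by (simp add: abs_le_iff less_imp_le)
  then have "(\<lambda>i. (of_bool (i \<notin> zero_digits y) / 2) / 2 ^ i) sums r 0"
    by (intro remainder_sums[where B = 1])
      (auto simp: r_def zero_digits_def doubling_def abs_le_iff)
  then show ?thesis
    by (simp add: r_def)
qed

lemma fibre_contains_sums:
  assumes "is_attractor K" "y \<in> {0..<1}"
    and "\<And>i. e i \<in> unit_fracs" "\<And>i. i \<notin> zero_digits y \<Longrightarrow> e i = 0"
    and "(\<lambda>i. e i / 2 ^ Suc i) sums x"
  shows "x \<in> fibre K y"
proof -
  define v where "v i = (e i, of_bool (i \<notin> zero_digits y) :: real)" for i
  have "v i /\<^sub>R 2 ^ Suc i = (e i / 2 ^ Suc i, of_bool (i \<notin> zero_digits y) / 2 ^ Suc i)" for i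
    by (simp add: v_def field_simps)
  then have sums: "(\<lambda>i. v i /\<^sub>R 2 ^ Suc i) sums (x, y)"
    using sums_Pair[OF assms(5) binary_expansion] assms(2) by simp
  have digit: "v i \<in> attractor_digits" for i
    using assms(3,4) by (cases "i \<in> zero_digits y") (simp_all add: v_def attractor_digits_def)
  have step: "(p + v i) /\<^sub>R 2 \<in> K" if "p \<in> K" for p i
    by (rule attractor_halving_step[OF assms(1) that digit])
  have "closed K" "K \<noteq> {}"
    using assms(1) unfolding is_attractor_def by (blast intro: compact_imp_closed)+
  then have "(x, y) \<in> K"
    using step sums by (rule closed_halving_invariant_sums_mem)
  then show ?thesis
    by (simp add: fibre_def)
qed

definition zero_count :: "nat \<Rightarrow> real \<Rightarrow> nat" where
  "zero_count N y = card (zero_digits y \<inter> {..<N})"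

lemma zero_digits_doubling: "i \<in> zero_digits (doubling y) \<longleftrightarrow> Suc i \<in> zero_digits y"
  by (simp add: zero_digits_def funpow_swap1)

lemma zero_count_Suc: "zero_count (Suc N) y = of_bool (2 * y < 1) + zero_count N (doubling y)"
proof -
  have "zero_digits y \<inter> {..<Suc N}
      = (zero_digits y \<inter> {0}) \<union> Suc ` (zero_digits (doubling y) \<inter> {..<N})"
    by (auto simp: lessThan_Suc_eq_insert_0 zero_digits_doubling)
  then show ?thesis
    by (simp add: zero_count_def card_Un_disjoint card_image zero_digits_def)
qed

lemma measurable_doubling [measurable]: "doubling \<in> borel_measurable borel"
  unfolding doubling_def by measurable

lemma measurable_zero_count [measurable]: "zero_count N \<in> borel \<rightarrow>\<^sub>M count_space UNIV"
proof (induction N)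
  case 0
  then show ?case by (simp add: zero_count_def)
next
  case (Suc N)
  note Suc.IH [measurable]
  have "zero_count (Suc N) = (\<lambda>y. of_bool (2 * y < 1) + zero_count N (doubling y))"
    by (simp add: zero_count_Suc fun_eq_iff)
  also have "\<dots> \<in> borel \<rightarrow>\<^sub>M count_space UNIV"
    by measurable
  finally show ?case .
qed

lemma nn_integral_zero_count_power:
  fixes c :: real
  assumes "0 \<le> c"
  shows "(\<integral>\<^sup>+y. indicator {0..<1} y * ennreal (c ^ zero_count N y) \<partial>lborel)
    = ennreal (((1 + c) / 2) ^ N)"
proof (induction N)
  case 0
  then show ?case by (simp add: zero_count_def)
next
  case (Suc N)
  define F where "F y = indicator {0..<1::real} y * ennreal (c ^ zero_count N y)" for y
  have [measurable]: "F \<in> borel_measurable borel"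
    unfolding F_def by measurable
  have F_affine: "(\<integral>\<^sup>+y. F (t + 2 * y) \<partial>lborel) = ennreal (((1 + c) / 2) ^ N / 2)" for t
  proof -
    have twice: "2 * (\<integral>\<^sup>+y. F (t + 2 * y) \<partial>lborel) = ennreal (((1 + c) / 2) ^ N)"
      using nn_integral_real_affine[of F 2 t] Suc by (simp add: F_def)
    have "(\<integral>\<^sup>+y. F (t + 2 * y) \<partial>lborel)
        = ennreal (1 / 2) * (2 * (\<integral>\<^sup>+y. F (t + 2 * y) \<partial>lborel))"
      using ennreal_mult[of "1 / 2" 2] by (simp add: mult.assoc[symmetric])
    also have "\<dots> = ennreal (((1 + c) / 2) ^ N / 2)"
      using ennreal_mult[of "1 / 2" "((1 + c) / 2) ^ N"] assms unfolding twice
      by (simp only: mult.commute[of "1 / 2"] times_divide_eq_right mult_1_right) simp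
    finally show ?thesis .
  qed
  have "indicator {0..<1} y * ennreal (c ^ zero_count (Suc N) y) = ennreal c * F (2 * y) + F (-1 + 2 * y)" for y
    using assms
    by (auto simp: F_def zero_count_Suc doubling_def indicator_def ennreal_mult[symmetric])
  then have "(\<integral>\<^sup>+y. indicator {0..<1} y * ennreal (c ^ zero_count (Suc N) y) \<partial>lborel)
      = ennreal c * (\<integral>\<^sup>+y. F (0 + 2 * y) \<partial>lborel) + (\<integral>\<^sup>+y. F (-1 + 2 * y) \<partial>lborel)"
    by (simp add: nn_integral_add nn_integral_cmult)
  also have "\<dots> = ennreal (((1 + c) / 2) ^ Suc N)"
    using assms unfolding F_affine
    by (simp add: ennreal_mult[symmetric] ennreal_plus[symmetric] field_simps del: ennreal_plus)
  finally show ?case .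
qed

lemma emeasure_sparse_zero_digits:
  "emeasure lborel {y \<in> {0..<1}. 3 * zero_count N y < N} \<le> ennreal ((91 / 96) ^ N)"
proof -
  let ?A = "{y \<in> {0..<1}. 3 * zero_count N y < N}"
  let ?F = "\<lambda>y. indicator {0..<1} y * ennreal ((27 / 64) ^ zero_count N y)"
  have markov: "indicator ?A y \<le> ennreal ((4 / 3) ^ N) * ?F y" for y :: real
  proof (cases "y \<in> ?A")
    case True
    then have "(3 / 4 :: real) ^ N \<le> (3 / 4) ^ (3 * zero_count N y)"
      by (intro power_decreasing) auto
    also have "\<dots> = (27 / 64) ^ zero_count N y"
      by (simp add: power_mult power_divide)
    finally have "1 \<le> (4 / 3 :: real) ^ N * (27 / 64) ^ zero_count N y"
      by (simp add: field_simps power_divide)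
    then show ?thesis
      using True by (simp add: ennreal_mult[symmetric])
  qed simp
  have "emeasure lborel ?A = (\<integral>\<^sup>+y. indicator ?A y \<partial>lborel)"
    by simp
  also have "\<dots> \<le> (\<integral>\<^sup>+y. ennreal ((4 / 3) ^ N) * ?F y \<partial>lborel)"
    by (rule nn_integral_mono) (rule markov)
  also have "\<dots> = ennreal ((4 / 3) ^ N) * (\<integral>\<^sup>+y. ?F y \<partial>lborel)"
    by (rule nn_integral_cmult) measurable
  also have "\<dots> = ennreal ((91 / 96) ^ N)"
    by (simp add: nn_integral_zero_count_power ennreal_mult[symmetric] power_mult_distrib[symmetric])
  finally show ?thesis .
qed

lemma AE_dense_zero_digits:
  "AE y in lborel. y \<in> {0..<1} \<longrightarrow> (\<forall>\<^sub>F N in sequentially. N \<le> 3 * zero_count N y)"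
proof -
  define A where "A N = {y \<in> {0..<1}. 3 * zero_count N y < N}" for N
  have [measurable]: "A N \<in> sets borel" for N
    unfolding A_def by measurable
  have "emeasure lborel (A N) < \<infinity>" for N
    using emeasure_sparse_zero_digits[of N] by (simp add: A_def le_less_trans)
  moreover have "summable (\<lambda>N. measure lborel (A N))"
  proof (rule summable_comparison_test)
    show "\<exists>M. \<forall>N\<ge>M. norm (measure lborel (A N)) \<le> (91 / 96) ^ N"
      using emeasure_sparse_zero_digits by (auto simp: A_def measure_def intro!: enn2real_leI)
  qed simp
  ultimately have "AE y in lborel. \<forall>\<^sub>F N in sequentially. y \<notin> A N"
    using borel_cantelli_AE1[of A lborel] by simp
  then show ?thesis
    by eventually_elim (auto elim!: eventually_mono simp: A_def)
qed

lemma fibre_contains_interval: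
  assumes "is_attractor K" "y \<in> {0..<1}" and "\<forall>\<^sub>F N in sequentially. N \<le> 3 * zero_count N y"
  shows "\<exists>a b. a < b \<and> {a..b} \<subseteq> fibre K y"
proof -
  obtain N0 where dense: "\<And>N. N \<ge> N0 \<Longrightarrow> N \<le> 3 * card (zero_digits y \<inter> {..<N})"
    using assms(3) unfolding eventually_sequentially zero_count_def by blast
  define p where "p = enumerate (zero_digits y)"
  have inf: "infinite (zero_digits y)" and p_lt: "p j < 3 * Suc j + N0" for j
    using enumerate_le_of_density[of 3 N0 "zero_digits y", OF _ dense] by (simp_all add: p_def)
  have p_le: "p j \<le> 3 * j + (N0 + 2)" for j
    using p_lt[of j] by simp
  have "strict_mono p" "range p = zero_digits y"
    using inf by (simp_all add: p_def strict_mono_enumerate range_enumerate)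
  define b :: real where "b = 1 / 2 ^ (3 + (N0 + 2) + 1)"
  have "{0..b} \<subseteq> fibre K y"
  proof
    fix x assume "x \<in> {0..b}"
    then have "0 \<le> x" "x \<le> 1 / 2 ^ (3 + (N0 + 2) + 1)"
      by (auto simp: b_def)
    then obtain e where "\<And>i. e i \<in> unit_fracs" "\<And>i. i \<notin> range p \<Longrightarrow> e i = 0"
      and "(\<lambda>i. e i / 2 ^ Suc i) sums x"
      using sparse_unit_frac_expansion[OF \<open>strict_mono p\<close> zero_less_numeral p_le] by blast
    then show "x \<in> fibre K y"
      using assms(1,2) \<open>range p = zero_digits y\<close> by (intro fibre_contains_sums) auto
  qed
  moreover have "0 < b"
    by (simp add: b_def)
  ultimately show ?thesis
    by blast
qed

theorem proposition2p5:
  fixes K :: "(real \<times> real) set"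
  assumes "is_attractor K"
  shows "AE y in lebesgue. y \<in> {0..1} \<longrightarrow> (\<exists>a b. a < b \<and> {a..b} \<subseteq> fibre K y)"
proof -
  have "AE y in lborel. y \<in> {0..1} \<longrightarrow> (\<exists>a b. a < b \<and> {a..b} \<subseteq> fibre K y)"
    using AE_dense_zero_digits AE_lborel_singleton[of 1]
    by eventually_elim (auto intro: fibre_contains_interval[OF assms])
  then show ?thesis
    by (rule AE_completion)
qed

end
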